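(* Consider the sequential occupancy game described in the context. For every $t\in\{0,\dots,\ell-1\}$ and every sequential occupancy state $x_{1,t}$ at sub-stage $(1,t)$, \[ v^*_{\mathrm{seq}}(x_{1,t})=\max_{d_{1,t}\in\mathcal D_{1,t}}\Big[\rho_{\mathrm{seq}}(x_{1,t},d_{1,t})+\gamma_1\, v^*_{\mathrm{seq}}\big(\tau_{\mathrm{seq}}(x_{1,t},d_{1,t})\big)\Big], \] and for every sequential occupancy state $x_{2,t}$ at sub-stage $(2,t)$, \[ v^*_{\mathrm{seq}}(x_{2,t})=\min_{d_{2,t}\in\mathcal D_{2,t}}\Big[\rho_{\mathrm{seq}}(x_{2,t},d_{2,t})+\gamma_2\, v^*_{\mathrm{seq}}\big(\tau_{\mathrm{seq}}(x_{2,t},d_{2,t})\big)\Big], \] where $\gamma_1=1$ and $\gamma_2=\gamma$, and the maximum and minimum are attained.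
   Context: A finite-horizon two-player zero-sum partially observable stochastic game consists of finite sets $\mathcal S$ (hidden states), $\mathcal A_1,\mathcal A_2$ (actions), $\mathcal Z_1,\mathcal Z_2$ (private observations), a kernel $p(s',z_1,z_2\mid s,a_1,a_2)$ giving the joint probability of next state and observations, a reward $r(s,a_1,a_2)\in\mathbb R$ received by player 1 (maximiser) and paid by player 2 (minimiser), an initial distribution $b\in\Delta(\mathcal S)$, a discount $\gamma\in[0,1)$ and a horizon $\ell\in\mathbb N$. Player $i$'s private history at stage $t$ is $h_{i,t}=(a_{i,0},z_{i,1},\dots,a_{i,t-1},z_{i,t})$ (empty at $t=0$), ranging over the finite set $\mathcal H_{i,t}$; appending an action and observation is written $h_{i,t}\cdot a_i\cdot z_i$. A decision rule is a map $d_{i,t}:\mathcal H_{i,t}\to\Delta(\mathcal A_i)$; $\mathcal D_{i,t}$ is the set of them. Each stage $t<\ell$ is split into sub-stages $(1,t)$ then $(2,t)$; $(1,\ell)$ is terminal. A sequential occupancy state at $(1,t)$ is $x_{1,t}\in\Delta(\mathcal S\times\mathcal H_{1,t}\times\mathcal H_{2,t})$ and at $(2,t)$ is $x_{2,t}\in\Delta(\mathcal S\times\mathcal H_{1,t}\times\mathcal H_{2,t}\times\mathcal A_1)$. Transitions and rewards: $\tau_{\mathrm{seq}}(x_{1,t},d_{1,t})(s,h_1,h_2,a_1)=x_{1,t}(s,h_1,h_2)\,d_{1,t}(a_1\mid h_1)$, $\rho_{\mathrm{seq}}(x_{1,t},d_{1,t})=0$; $\tau_{\mathrm{seq}}(x_{2,t},d_{2,t})(s',h_1\cdot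 a_1\cdot z_1,h_2\cdot a_2\cdot z_2)=\sum_s x_{2,t}(s,h_1,h_2,a_1)\,d_{2,t}(a_2\mid h_2)\,p(s',z_1,z_2\mid s,a_1,a_2)$ (an occupancy at $(1,t+1)$), and $\rho_{\mathrm{seq}}(x_{2,t},d_{2,t})=\sum_{s,h_1,h_2,a_1,a_2}x_{2,t}(s,h_1,h_2,a_1)\,d_{2,t}(a_2\mid h_2)\,r(s,a_1,a_2)$. The sequential occupancy game from an occupancy $x$ at sub-stage $(i,t)$: at each subsequent sub-stage $(1,k)$ player 1 chooses $d_{1,k}\in\mathcal D_{1,k}$, at each $(2,k)$ player 2 chooses $d_{2,k}\in\mathcal D_{2,k}$, the occupancy evolves deterministically by $\tau_{\mathrm{seq}}$, and the total payoff is $\sum_{k}\gamma^{k-t}\rho_{\mathrm{seq}}(x_{2,k},d_{2,k})$ over the sub-stages $(2,k)$, $k\ge t$, visited before $(1,\ell)$. A strategy of a player maps each sequence of previously chosen decision rules (equivalently the path of occupancies) ending at one of its own sub-stages to a decision rule of that sub-stage. $v^*_{\mathrm{seq}}(x)$ is the supremum over player-1 strategies of the infimum over player-2 strategies of the total payoff from $x$; in particular $v^*_{\mathrm{seq}}(x_{1,\ell})=0$. *)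

theory Defs
  imports "HOL-Probability.Probability_Mass_Function"
begin

text \<open>Private histories of length t: lists of (action, observation) pairs.
  h \<cdot> a \<cdot> z is written  h @ [(a, z)].\<close>
definition hist :: "nat \<Rightarrow> ('a \<times> 'z) list set" where
  "hist t = {h. length h = t}"

definition occ1 :: "nat \<Rightarrow> ('s \<times> ('a1 \<times> 'z1) list \<times> ('a2 \<times> 'z2) list \<Rightarrow> real) \<Rightarrow> bool" where
  "occ1 t x \<longleftrightarrow> (\<forall>w. 0 \<le> x w)
     \<and> (\<forall>s h1 h2. x (s, h1, h2) \<noteq> 0 \<longrightarrow> length h1 = t \<and> length h2 = t)
     \<and> (\<Sum>w\<in>UNIV \<times> hist t \<times> hist t. x w) = 1"

definition occ2 :: "nat \<Rightarrow> ('s \<times> ('a1 \<times> 'z1) list \<times> ('a2 \<times> 'z2) list \<times> 'a1 \<Rightarrow> real) \<Rightarrow> bool" where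
  "occ2 t y \<longleftrightarrow> (\<forall>w. 0 \<le> y w)
     \<and> (\<forall>s h1 h2 a1. y (s, h1, h2, a1) \<noteq> 0 \<longrightarrow> length h1 = t \<and> length h2 = t)
     \<and> (\<Sum>w\<in>UNIV \<times> hist t \<times> hist t \<times> UNIV. y w) = 1"

definition tau1 ::
  "('s \<times> ('a1 \<times> 'z1) list \<times> ('a2 \<times> 'z2) list \<Rightarrow> real) \<Rightarrow> (('a1 \<times> 'z1) list \<Rightarrow> 'a1 pmf)
    \<Rightarrow> ('s \<times> ('a1 \<times> 'z1) list \<times> ('a2 \<times> 'z2) list \<times> 'a1 \<Rightarrow> real)" where
  "tau1 x d = (\<lambda>(s, h1, h2, a1). x (s, h1, h2) * pmf (d h1) a1)"

definition rho1 ::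
  "('s \<times> ('a1 \<times> 'z1) list \<times> ('a2 \<times> 'z2) list \<Rightarrow> real) \<Rightarrow> (('a1 \<times> 'z1) list \<Rightarrow> 'a1 pmf) \<Rightarrow> real" where
  "rho1 x d = 0"

text \<open>Transition and reward at sub-stage (2,t); p s a1 a2 is the joint
  distribution of (next state, observation 1, observation 2).\<close>
definition tau2 ::
  "('s \<Rightarrow> 'a1 \<Rightarrow> 'a2 \<Rightarrow> ('s \<times> 'z1 \<times> 'z2) pmf)
    \<Rightarrow> ('s \<times> ('a1 \<times> 'z1) list \<times> ('a2 \<times> 'z2) list \<times> 'a1 \<Rightarrow> real) \<Rightarrow> (('a2 \<times> 'z2) list \<Rightarrow> 'a2 pmf)
    \<Rightarrow> ('s \<times> ('a1 \<times> 'z1) list \<times> ('a2 \<times> 'z2) list \<Rightarrow> real)" where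
  "tau2 p y d = (\<lambda>(s', h1', h2').
     if h1' \<noteq> [] \<and> h2' \<noteq> [] then
       (case last h1' of (a1, z1) \<Rightarrow> case last h2' of (a2, z2) \<Rightarrow>
          \<Sum>s\<in>UNIV. y (s, butlast h1', butlast h2', a1) * pmf (d (butlast h2')) a2
                      * pmf (p s a1 a2) (s', z1, z2))
     else 0)"

definition rho2 ::
  "nat \<Rightarrow> ('s \<Rightarrow> 'a1 \<Rightarrow> 'a2 \<Rightarrow> real)
    \<Rightarrow> ('s \<times> ('a1 \<times> 'z1) list \<times> ('a2 \<times> 'z2) list \<times> 'a1 \<Rightarrow> real) \<Rightarrow> (('a2 \<times> 'z2) list \<Rightarrow> 'a2 pmf) \<Rightarrow> real" where
  "rho2 t r y d = (\<Sum>(s, h1, h2, a1)\<in>UNIV \<times> hist t \<times> hist t \<times> UNIV.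
       \<Sum>a2\<in>UNIV. y (s, h1, h2, a1) * pmf (d h2) a2 * r s a1 a2)"

text \<open>A strategy maps the sequence of
  previously chosen decision rules (Inl = player 1's, Inr = player 2's) to a
  decision rule. play n ... t x hs: total discounted payoff from sub-stage (1,t),
  occupancy x, when n full stages remain, given the earlier decision-rule sequence hs.\<close>
fun play ::
  "nat \<Rightarrow> ('s \<Rightarrow> 'a1 \<Rightarrow> 'a2 \<Rightarrow> ('s \<times> 'z1 \<times> 'z2) pmf) \<Rightarrow> ('s \<Rightarrow> 'a1 \<Rightarrow> 'a2 \<Rightarrow> real) \<Rightarrow> real
    \<Rightarrow> (((('a1 \<times> 'z1) list \<Rightarrow> 'a1 pmf) + (('a2 \<times> 'z2) list \<Rightarrow> 'a2 pmf)) list \<Rightarrow> (('a1 \<times> 'z1) list \<Rightarrow> 'a1 pmf))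
    \<Rightarrow> (((('a1 \<times> 'z1) list \<Rightarrow> 'a1 pmf) + (('a2 \<times> 'z2) list \<Rightarrow> 'a2 pmf)) list \<Rightarrow> (('a2 \<times> 'z2) list \<Rightarrow> 'a2 pmf))
    \<Rightarrow> nat \<Rightarrow> ('s \<times> ('a1 \<times> 'z1) list \<times> ('a2 \<times> 'z2) list \<Rightarrow> real)
    \<Rightarrow> ((('a1 \<times> 'z1) list \<Rightarrow> 'a1 pmf) + (('a2 \<times> 'z2) list \<Rightarrow> 'a2 pmf)) list \<Rightarrow> real" where
  "play 0 p r g \<sigma>1 \<sigma>2 t x hs = 0"
| "play (Suc n) p r g \<sigma>1 \<sigma>2 t x hs =
     (let d1 = \<sigma>1 hs; y = tau1 x d1; hs' = hs @ [Inl d1]; d2 = \<sigma>2 hs'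
      in rho1 x d1 + (rho2 t r y d2 + g * play n p r g \<sigma>1 \<sigma>2 (Suc t) (tau2 p y d2) (hs' @ [Inr d2])))"

definition pay1 where
  "pay1 p r g L \<sigma>1 \<sigma>2 t x = play (L - t) p r g \<sigma>1 \<sigma>2 t x []"

definition pay2 where
  "pay2 p r g L \<sigma>1 \<sigma>2 t y =
     (if L \<le> t then 0 else
      (let d2 = \<sigma>2 [] in
       rho2 t r y d2 + g * play (L - Suc t) p r g \<sigma>1 \<sigma>2 (Suc t) (tau2 p y d2) [Inr d2]))"

definition vseq1 where
  "vseq1 p r g L t x = (SUP \<sigma>1. INF \<sigma>2. pay1 p r g L \<sigma>1 \<sigma>2 t x)"

definition vseq2 where
  "vseq2 p r g L t y = (SUP \<sigma>1. INF \<sigma>2. pay2 p r g L \<sigma>1 \<sigma>2 t y)"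

end

theory Submission
  imports Defs
begin

text \<open>
  Both equations come from peeling off the first move of the game. At (1,t) a strategy of
  player 1 is the same as a first decision rule d together with a continuation strategy, and d
  only moves the occupancy to tau1 x d; hence the value is the supremum over d of the value at
  (2,t). At (2,t) player 1's continuation may depend on player 2's first decision rule d, so a
  strategy of player 1 is a family of continuations indexed by d, and the supremum over such
  families of the infimum over d equals the infimum over d of the supremum over continuations
  (choose an almost optimal continuation for every d separately).

  The optima are attained because decision rules form a product of simplices, compact by
  Tychonoff's theorem, and the values are Lipschitz in the occupancy for the l1 norm on the
  histories of the current length: every payoff is linear in the occupancy and bounded by a
  multiple of that norm, and these two properties survive taking suprema and infima.
\<close>

section \<open>Suprema and infima of bounded real families\<close>

lemma INF_real_eq_uminus_SUP: "(INF x. f x) = - (SUP x. - f x :: real)"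
  by (simp add: Inf_real_def image_image)

lemma bdd_above_range_if_abs_le:
  fixes f :: "'a \<Rightarrow> real"
  assumes "\<And>i. \<bar>f i\<bar> \<le> B"
  shows "bdd_above (range f)"
  using assms by (intro bdd_aboveI2[of _ _ B]) (blast dest: abs_le_D1)

lemma bdd_below_range_if_abs_le:
  fixes f :: "'a \<Rightarrow> real"
  assumes "\<And>i. \<bar>f i\<bar> \<le> B"
  shows "bdd_below (range f)"
  using assms by (intro bdd_belowI2[of _ "- B"]) (metis abs_le_D2 minus_le_iff)

lemma abs_SUP_le:
  fixes f :: "'a \<Rightarrow> real"
  assumes "\<And>i. \<bar>f i\<bar> \<le> B"
  shows "\<bar>SUP i. f i\<bar> \<le> B"
proof -
  have "(SUP i. f i) \<le> B"
    using assms by (intro cSUP_least) (auto simp: abs_le_iff)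
  moreover have "f i \<le> (SUP i. f i)" for i
    by (rule cSUP_upper[OF _ bdd_above_range_if_abs_le[OF assms]]) simp
  ultimately show ?thesis
    using assms[of undefined] by (smt (verit))
qed

lemma abs_INF_le:
  fixes f :: "'a \<Rightarrow> real"
  assumes "\<And>i. \<bar>f i\<bar> \<le> B"
  shows "\<bar>INF i. f i\<bar> \<le> B"
  using abs_SUP_le[of "\<lambda>i. - f i" B] assms by (simp add: INF_real_eq_uminus_SUP)

lemma SUP_INF_le_SUP_INF_add:
  fixes f f' :: "'a \<Rightarrow> 'b \<Rightarrow> real"
  assumes f: "\<And>a b. \<bar>f a b\<bar> \<le> B" and f': "\<And>a b. \<bar>f' a b\<bar> \<le> B"
    and le: "\<And>a b. f a b \<le> f' a b + e"
  shows "(SUP a. INF b. f a b) \<le> (SUP a. INF b. f' a b) + e"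
proof (rule cSUP_least)
  fix a
  have "(INF b. f a b) - e \<le> (INF b. f' a b)"
  proof (rule cINF_greatest)
    fix b
    have "(INF b. f a b) \<le> f a b"
      by (rule cINF_lower[OF bdd_below_range_if_abs_le[OF f]]) simp
    then show "(INF b. f a b) - e \<le> f' a b"
      using le[of a b] by simp
  qed simp
  also have "\<dots> \<le> (SUP a. INF b. f' a b)"
    by (rule cSUP_upper[OF _ bdd_above_range_if_abs_le[OF abs_INF_le[OF f']]]) simp
  finally show "(INF b. f a b) \<le> (SUP a. INF b. f' a b) + e"
    by simp
qed simp

lemma abs_SUP_INF_diff_le:
  fixes f :: "'a \<Rightarrow> 'b \<Rightarrow> 'x::minus \<Rightarrow> real"
  assumes linear: "\<And>a b x x'. f a b (x - x') = f a b x - f a b x'"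
    and bound: "\<And>a b x. \<bar>f a b x\<bar> \<le> K * N x"
    and "0 \<le> K" and N_nonneg: "\<And>x. 0 \<le> N x"
  shows "\<bar>(SUP a. INF b. f a b x) - (SUP a. INF b. f a b x')\<bar> \<le> K * N (x - x')"
proof -
  have x: "\<bar>f a b x\<bar> \<le> K * (N x + N x')" and x': "\<bar>f a b x'\<bar> \<le> K * (N x + N x')" for a b
    using bound[of a b x] bound[of a b x'] mult_left_mono[OF _ \<open>0 \<le> K\<close>, of "N x" "N x + N x'"]
      mult_left_mono[OF _ \<open>0 \<le> K\<close>, of "N x'" "N x + N x'"] N_nonneg[of x] N_nonneg[of x']
    by auto
  have le: "f a b x \<le> f a b x' + K * N (x - x')" "f a b x' \<le> f a b x + K * N (x - x')" for a b
    using bound[of a b "x - x'"] by (simp_all add: linear abs_le_iff)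
  have "(SUP a. INF b. f a b x) \<le> (SUP a. INF b. f a b x') + K * N (x - x')"
    by (rule SUP_INF_le_SUP_INF_add[OF x x' le(1)])
  moreover have "(SUP a. INF b. f a b x') \<le> (SUP a. INF b. f a b x) + K * N (x - x')"
    by (rule SUP_INF_le_SUP_INF_add[OF x' x le(2)])
  ultimately show ?thesis
    by simp
qed

lemma SUP_affine:
  fixes f :: "'a \<Rightarrow> real"
  assumes "\<And>i. \<bar>f i\<bar> \<le> B" and "0 \<le> g"
  shows "(SUP i. c + g * f i) = c + g * (SUP i. f i)"
proof -
  have "mono (\<lambda>v. c + g * v)"
    using \<open>0 \<le> g\<close> by (auto simp: mono_def mult_left_mono)
  moreover have "continuous (at_left (Sup (range f))) (\<lambda>v. c + g * v)"
    by (intro continuous_intros)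
  ultimately have "c + g * Sup (range f) = Sup ((\<lambda>v. c + g * v) ` range f)"
    using continuous_at_Sup_mono[of "\<lambda>v. c + g * v" "range f"] bdd_above_range_if_abs_le[of f B] assms(1)
    by auto
  then show ?thesis
    by (simp add: image_image)
qed

lemma INF_affine:
  fixes f :: "'a \<Rightarrow> real"
  assumes "\<And>i. \<bar>f i\<bar> \<le> B" and "0 \<le> g"
  shows "(INF i. c + g * f i) = c + g * (INF i. f i)"
  using SUP_affine[of "\<lambda>i. - f i" B g "- c"] assms by (simp add: INF_real_eq_uminus_SUP)

lemma SUP_INF_choice_eq_INF_SUP:
  fixes W :: "'d \<Rightarrow> 't \<Rightarrow> real"
  assumes bound: "\<And>d \<tau>. \<bar>W d \<tau>\<bar> \<le> B"
  shows "(SUP F. INF d. W d (F d)) = (INF d. SUP \<tau>. W d \<tau>)"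
proof (rule antisym)
  have W_le_SUP: "W d \<tau> \<le> (SUP \<tau>. W d \<tau>)" for d \<tau>
    by (rule cSUP_upper[OF _ bdd_above_range_if_abs_le[OF bound]]) simp
  have INF_le_W: "(INF d. W d (F d)) \<le> W d (F d)" for F d
    by (rule cINF_lower[OF bdd_below_range_if_abs_le[OF bound]]) simp
  show "(SUP F. INF d. W d (F d)) \<le> (INF d. SUP \<tau>. W d \<tau>)"
    using order_trans[OF INF_le_W W_le_SUP] by (intro cSUP_least cINF_greatest) auto
  show "(INF d. SUP \<tau>. W d \<tau>) \<le> (SUP F. INF d. W d (F d))"
  proof (rule field_le_epsilon)
    fix e :: real
    assume "0 < e"
    have "\<exists>\<tau>. (SUP \<tau>. W d \<tau>) - e < W d \<tau>" for d
    proof -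
      have "(SUP \<tau>. W d \<tau>) - e < (SUP \<tau>. W d \<tau>)"
        using \<open>0 < e\<close> by simp
      then show ?thesis
        using less_cSUP_iff[OF _ bdd_above_range_if_abs_le[of "W d" B]] bound by blast
    qed
    then obtain F where F: "\<And>d. (SUP \<tau>. W d \<tau>) - e < W d (F d)"
      by metis
    have "(INF d. SUP \<tau>. W d \<tau>) - e \<le> (INF d. W d (F d))"
    proof (rule cINF_greatest)
      fix d
      have "(INF d. SUP \<tau>. W d \<tau>) \<le> (SUP \<tau>. W d \<tau>)"
        by (rule cINF_lower[OF bdd_below_range_if_abs_le[OF abs_SUP_le[OF bound]]]) simp
      then show "(INF d. SUP \<tau>. W d \<tau>) - e \<le> W d (F d)"
        using F[of d] by simp
    qed simp
    also have "\<dots> \<le> (SUP F. INF d. W d (F d))"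
      by (rule cSUP_upper[OF _ bdd_above_range_if_abs_le[OF abs_INF_le[OF bound]]]) simp
    finally show "(INF d. SUP \<tau>. W d \<tau>) \<le> (SUP F. INF d. W d (F d)) + e"
      by simp
  qed
qed

section \<open>Splitting off the first move of a strategy\<close>

definition continuation :: "'e \<Rightarrow> ('e list \<Rightarrow> 'b) \<Rightarrow> 'e list \<Rightarrow> 'b" where
  "continuation e \<sigma> = (\<lambda>l. \<sigma> (e # l))"

lemma continuation_apply [simp]: "continuation e \<sigma> l = \<sigma> (e # l)"
  by (simp add: continuation_def)

lemma surj_continuation: "surj (continuation e)"
  by (rule surjI[of _ "\<lambda>\<tau> l. \<tau> (tl l)"]) (simp add: continuation_def)

lemma surj_continuation_family:
  assumes "inj c"
  shows "surj (\<lambda>\<sigma> d. continuation (c d) \<sigma>)"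
  by (rule surjI[of _ "\<lambda>F l. F (inv c (hd l)) (tl l)"]) (simp add: continuation_def assms)

lemma INF_continuation: "(INF \<sigma>. f (continuation e \<sigma>)) = (INF \<tau>. f \<tau>)"
  by (metis range_composition surj_continuation)

lemma SUP_continuation_family:
  assumes "inj c"
  shows "(SUP \<sigma>. f (\<lambda>d. continuation (c d) \<sigma>)) = (SUP F. f F)"
  by (metis range_composition surj_continuation_family[OF assms])

lemma SUP_first_move:
  fixes f :: "'d \<Rightarrow> ('e list \<Rightarrow> 'd) \<Rightarrow> real"
  assumes bound: "\<And>d \<tau>. \<bar>f d \<tau>\<bar> \<le> B"
  shows "(SUP \<sigma>. f (\<sigma> []) (continuation (c (\<sigma> [])) \<sigma>)) = (SUP d. SUP \<tau>. f d \<tau>)"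
proof (rule antisym)
  have f_le_SUP: "f d \<tau> \<le> (SUP \<tau>. f d \<tau>)" for d \<tau>
    by (rule cSUP_upper[OF _ bdd_above_range_if_abs_le[OF bound]]) simp
  have SUP_le_SUP: "(SUP \<tau>. f d \<tau>) \<le> (SUP d. SUP \<tau>. f d \<tau>)" for d
    by (rule cSUP_upper[OF _ bdd_above_range_if_abs_le[OF abs_SUP_le[OF bound]]]) simp
  show "(SUP \<sigma>. f (\<sigma> []) (continuation (c (\<sigma> [])) \<sigma>)) \<le> (SUP d. SUP \<tau>. f d \<tau>)"
    using f_le_SUP SUP_le_SUP by (intro cSUP_least) (auto intro: order_trans)
  show "(SUP d. SUP \<tau>. f d \<tau>) \<le> (SUP \<sigma>. f (\<sigma> []) (continuation (c (\<sigma> [])) \<sigma>))"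
  proof (intro cSUP_least)
    fix d \<tau>
    define \<sigma> :: "'e list \<Rightarrow> 'd" where "\<sigma> l = (if l = [] then d else \<tau> (tl l))" for l
    have "f d \<tau> = f (\<sigma> []) (continuation (c (\<sigma> [])) \<sigma>)"
      by (simp add: \<sigma>_def continuation_def)
    also have "\<dots> \<le> (SUP \<sigma>. f (\<sigma> []) (continuation (c (\<sigma> [])) \<sigma>))"
      by (rule cSUP_upper[OF _ bdd_above_range_if_abs_le[OF bound]]) simp
    finally show "f d \<tau> \<le> (SUP \<sigma>. f (\<sigma> []) (continuation (c (\<sigma> [])) \<sigma>))" .
  qed simp_all
qed

lemma INF_first_move:
  fixes f :: "'d \<Rightarrow> ('e list \<Rightarrow> 'd) \<Rightarrow> real"
  assumes "\<And>d \<tau>. \<bar>f d \<tau>\<bar> \<le> B"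
  shows "(INF \<sigma>. f (\<sigma> []) (continuation (c (\<sigma> [])) \<sigma>)) = (INF d. INF \<tau>. f d \<tau>)"
  using SUP_first_move[of "\<lambda>d \<tau>. - f d \<tau>" B c] assms by (simp add: INF_real_eq_uminus_SUP)

section \<open>Decision rules as points of a compact space\<close>

lemma compact_PiE_UNIV:
  fixes S :: "'a \<Rightarrow> 'b::topological_space set"
  assumes "\<And>i. compact (S i)"
  shows "compact (PiE UNIV S)"
  using compactin_PiE[of "\<lambda>i. euclidean" UNIV S] euclidean_product_topology assms
  by (metis compactin_euclidean_iff)

definition prob_vectors :: "('a::finite \<Rightarrow> real) set" where
  "prob_vectors = {v. (\<forall>a. 0 \<le> v a) \<and> sum v UNIV = 1}"

lemma compact_prob_vectors: "compact (prob_vectors :: ('a::finite \<Rightarrow> real) set)"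
proof -
  have "prob_vectors = (\<Inter>a. {v. 0 \<le> v a}) \<inter> {v. sum v UNIV = 1}"
    by (auto simp: prob_vectors_def)
  also have "closed \<dots>"
    by (intro closed_Int closed_INT ballI closed_Collect_le closed_Collect_eq continuous_on_const
        continuous_on_sum continuous_on_product_coordinates)
  finally have "closed prob_vectors" .
  moreover have "prob_vectors \<subseteq> PiE UNIV (\<lambda>_::'a. {0..1::real})"
  proof
    fix v :: "'a \<Rightarrow> real"
    assume "v \<in> prob_vectors"
    then have "0 \<le> v a" "v a \<le> sum v UNIV" "sum v UNIV = 1" for a
      using member_le_sum[of a UNIV v] by (auto simp: prob_vectors_def)
    then show "v \<in> PiE UNIV (\<lambda>_::'a. {0..1::real})"
      by (simp add: PiE_UNIV_domain)
  qed
  moreover have "compact (PiE UNIV (\<lambda>_::'a. {0..1::real}))"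
    by (rule compact_PiE_UNIV) simp
  ultimately show ?thesis
    by (metis compact_Int_closed inf.absorb_iff2)
qed

text \<open>Type \<open>pmf\<close> carries no topology, so decision rules are handled through their
  probability vectors; \<open>pmf_rule q\<close> is only meaningful for \<open>q \<in> rule_vectors\<close>.\<close>

definition rule_vectors :: "('h \<Rightarrow> 'a::finite \<Rightarrow> real) set" where
  "rule_vectors = PiE UNIV (\<lambda>_. prob_vectors)"

definition pmf_rule :: "('h \<Rightarrow> 'a::finite \<Rightarrow> real) \<Rightarrow> 'h \<Rightarrow> 'a pmf" where
  "pmf_rule q = (\<lambda>h. embed_pmf (q h))"

lemma compact_rule_vectors: "compact rule_vectors"
  unfolding rule_vectors_def by (intro compact_PiE_UNIV compact_prob_vectors)

lemma pmf_pmf_rule: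
  assumes "q \<in> rule_vectors"
  shows "pmf (pmf_rule q h) a = q h a"
proof -
  have "q h \<in> prob_vectors"
    using assms by (auto simp: rule_vectors_def)
  then show ?thesis
    unfolding pmf_rule_def prob_vectors_def
    by (subst pmf_embed_pmf) (auto simp: nn_integral_count_space_finite sum_ennreal)
qed

lemma pmf_vector_in_rule_vectors: "(\<lambda>h a. pmf (d h) a) \<in> rule_vectors"
  by (simp add: rule_vectors_def prob_vectors_def PiE_UNIV_domain sum_pmf_eq_1)

lemma pmf_rule_pmf_vector: "pmf_rule (\<lambda>h a. pmf (d h) a) = d"
  by (intro ext pmf_eqI) (simp add: pmf_pmf_rule[OF pmf_vector_in_rule_vectors])

lemma continuous_on_rule_entry: "continuous_on S (\<lambda>q :: 'h \<Rightarrow> 'a \<Rightarrow> real. q h a)"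
  by (rule continuous_on_product_then_coordinatewise[OF continuous_on_product_then_coordinatewise[OF continuous_on_id]])

lemma decision_rule_maximum_exists:
  fixes F :: "('h \<Rightarrow> 'a::finite pmf) \<Rightarrow> real"
  assumes "continuous_on rule_vectors (\<lambda>q. F (pmf_rule q))"
  shows "\<exists>d. \<forall>d'. F d' \<le> F d"
proof -
  obtain q where q: "\<forall>q' \<in> rule_vectors. F (pmf_rule q') \<le> F (pmf_rule q)"
    using continuous_attains_sup[OF compact_rule_vectors _ assms] pmf_vector_in_rule_vectors by blast
  have "F d' \<le> F (pmf_rule q)" for d'
    using q pmf_vector_in_rule_vectors[of d'] pmf_rule_pmf_vector[of d'] by metis
  then show ?thesis
    by blast
qed

lemma decision_rule_minimum_exists:
  fixes F :: "('h \<Rightarrow> 'a::finite pmf) \<Rightarrow> real"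
  assumes "continuous_on rule_vectors (\<lambda>q. F (pmf_rule q))"
  shows "\<exists>d. \<forall>d'. F d \<le> F d'"
  using decision_rule_maximum_exists[of "\<lambda>d. - F d"] continuous_on_minus[OF assms] by force

section \<open>An l1 norm on occupancies\<close>

definition l1_on :: "'w set \<Rightarrow> ('w \<Rightarrow> real) \<Rightarrow> real" where
  "l1_on W x = (\<Sum>w\<in>W. \<bar>x w\<bar>)"

lemma l1_on_nonneg: "0 \<le> l1_on W x"
  by (simp add: l1_on_def sum_nonneg)

lemma abs_le_l1_on: "finite W \<Longrightarrow> w \<in> W \<Longrightarrow> \<bar>x w\<bar> \<le> l1_on W x"
  unfolding l1_on_def by (rule member_le_sum) auto

lemma continuous_on_lipschitz_l1_comp:
  fixes V :: "('w \<Rightarrow> real) \<Rightarrow> real" and Y :: "'q::topological_space \<Rightarrow> 'w \<Rightarrow> real"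
  assumes lipschitz: "\<And>y y'. \<bar>V y - V y'\<bar> \<le> K * l1_on W (y - y')" and "finite W"
    and continuous: "\<And>w. w \<in> W \<Longrightarrow> continuous_on S (\<lambda>q. Y q w)"
  shows "continuous_on S (\<lambda>q. V (Y q))"
  unfolding continuous_on_def
proof
  fix q0
  assume "q0 \<in> S"
  have "((\<lambda>q. K * (\<Sum>w\<in>W. \<bar>Y q w - Y q0 w\<bar>)) \<longlongrightarrow> K * (\<Sum>w\<in>W. \<bar>Y q0 w - Y q0 w\<bar>)) (at q0 within S)"
    using continuous \<open>q0 \<in> S\<close> unfolding continuous_on_def by (intro tendsto_intros) auto
  then have "((\<lambda>q. K * l1_on W (Y q - Y q0)) \<longlongrightarrow> 0) (at q0 within S)"
    by (simp add: l1_on_def)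
  then have "((\<lambda>q. V (Y q) - V (Y q0)) \<longlongrightarrow> 0) (at q0 within S)"
    by (rule Lim_null_comparison[rotated]) (simp add: lipschitz)
  then show "((\<lambda>q. V (Y q)) \<longlongrightarrow> V (Y q0)) (at q0 within S)"
    by (rule LIM_zero_cancel)
qed

section \<open>The sequential occupancy game\<close>

lemma finite_hist [simp]: "finite (hist t :: ('a::finite \<times> 'z::finite) list set)"
  using finite_lists_length_eq[of "UNIV :: ('a \<times> 'z) set" t] by (simp add: hist_def)

text \<open>Payoffs from sub-stage (i,t) only read the occupancy on histories of length t, so the
  l1 norm on the following finite domains controls them.\<close>

abbreviation occ1_dom :: "nat \<Rightarrow> ('s \<times> ('a1 \<times> 'z1) list \<times> ('a2 \<times> 'z2) list) set" where
  "occ1_dom t \<equiv> UNIV \<times> hist t \<times> hist t"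

abbreviation occ2_dom :: "nat \<Rightarrow> ('s \<times> ('a1 \<times> 'z1) list \<times> ('a2 \<times> 'z2) list \<times> 'a1) set" where
  "occ2_dom t \<equiv> UNIV \<times> hist t \<times> hist t \<times> UNIV"

lemma l1_on_tau1:
  fixes x :: "'s::finite \<times> ('a1::finite \<times> 'z1::finite) list \<times> ('a2::finite \<times> 'z2::finite) list \<Rightarrow> real"
  shows "l1_on (occ2_dom t) (tau1 x d) = l1_on (occ1_dom t) x"
  by (simp add: l1_on_def tau1_def abs_mult sum.cartesian_product' sum_distrib_left[symmetric]
      sum_pmf_eq_1)

lemma abs_rho2_le:
  fixes y :: "'s::finite \<times> ('a1::finite \<times> 'z1::finite) list \<times> ('a2::finite \<times> 'z2::finite) list \<times> 'a1 \<Rightarrow> real"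
  assumes r_le: "\<And>s a1 a2. \<bar>r s a1 a2\<bar> \<le> R"
  shows "\<bar>rho2 t r y d\<bar> \<le> R * l1_on (occ2_dom t) y"
proof -
  have "\<bar>\<Sum>a2\<in>UNIV. y (s, h1, h2, a1) * pmf (d h2) a2 * r s a1 a2\<bar> \<le> R * \<bar>y (s, h1, h2, a1)\<bar>"
    for s h1 h2 a1
  proof -
    have "\<bar>\<Sum>a2\<in>UNIV. y (s, h1, h2, a1) * pmf (d h2) a2 * r s a1 a2\<bar>
        \<le> (\<Sum>a2\<in>UNIV. \<bar>y (s, h1, h2, a1)\<bar> * pmf (d h2) a2 * R)"
      by (rule order_trans[OF sum_abs sum_mono]) (simp add: abs_mult mult_left_mono r_le)
    also have "\<dots> = R * \<bar>y (s, h1, h2, a1)\<bar>"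
      by (simp add: sum_distrib_left[symmetric] sum_distrib_right[symmetric] sum_pmf_eq_1)
    finally show ?thesis .
  qed
  then show ?thesis
    unfolding rho2_def l1_on_def sum_distrib_left
    by (intro order_trans[OF sum_abs sum_mono]) (auto simp: split_def)
qed

lemma l1_on_tau2_le:
  fixes p :: "'s::finite \<Rightarrow> 'a1::finite \<Rightarrow> 'a2::finite \<Rightarrow> ('s \<times> 'z1::finite \<times> 'z2::finite) pmf"
  shows "\<exists>C\<ge>0. \<forall>y d. l1_on (occ1_dom (Suc t)) (tau2 p y d) \<le> C * l1_on (occ2_dom t) y"
proof -
  let ?W = "occ1_dom (Suc t) :: ('s \<times> ('a1 \<times> 'z1) list \<times> ('a2 \<times> 'z2) list) set"
  have "\<bar>tau2 p y d w\<bar> \<le> CARD('s) * l1_on (occ2_dom t) y" if "w \<in> ?W" for y d w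
  proof -
    obtain s' h1 h2 where w: "w = (s', h1, h2)"
      by (cases w)
    have h: "h1 \<in> hist (Suc t)" "h2 \<in> hist (Suc t)"
      using that w by auto
    obtain a1 z1 a2 z2 where last: "last h1 = (a1, z1)" "last h2 = (a2, z2)"
      by (cases "last h1", cases "last h2")
    have "h1 \<noteq> []" "h2 \<noteq> []" and butlast: "butlast h1 \<in> hist t" "butlast h2 \<in> hist t"
      using h by (auto simp: hist_def)
    then have "\<bar>tau2 p y d w\<bar> \<le> (\<Sum>s\<in>UNIV. \<bar>y (s, butlast h1, butlast h2, a1)\<bar>
        * (pmf (d (butlast h2)) a2 * pmf (p s a1 a2) (s', z1, z2)))"
      by (auto simp: w tau2_def last abs_mult mult.assoc intro: order_trans[OF sum_abs])
    also have "\<dots> \<le> (\<Sum>s\<in>(UNIV :: 's set). l1_on (occ2_dom t) y)"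
      using butlast
      by (intro sum_mono order_trans[OF mult_left_le abs_le_l1_on]) (auto simp: mult_le_one pmf_le_1)
    finally show ?thesis
      by simp
  qed
  then have "l1_on ?W (tau2 p y d) \<le> card ?W * (CARD('s) * l1_on (occ2_dom t) y)" for y d
    unfolding l1_on_def by (intro sum_bounded_above) simp
  then show ?thesis
    by (intro exI[of _ "real (card ?W) * CARD('s)"]) (auto simp: mult.assoc)
qed

lemma tau1_diff: "tau1 (x - x') d = tau1 x d - tau1 x' d"
  by (auto simp: tau1_def fun_eq_iff left_diff_distrib)

lemma tau2_diff: "tau2 p (y - y') d = tau2 p y d - tau2 p y' d"
  by (auto simp: tau2_def fun_eq_iff left_diff_distrib sum_subtractf split: prod.split)

lemma rho2_diff: "rho2 t r (y - y') d = rho2 t r y d - rho2 t r y' d"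
  by (simp add: rho2_def left_diff_distrib sum_subtractf split_def)

lemma play_diff:
  "play n p r g \<sigma>1 \<sigma>2 t (x - x') hs = play n p r g \<sigma>1 \<sigma>2 t x hs - play n p r g \<sigma>1 \<sigma>2 t x' hs"
proof (induction n arbitrary: t x x' hs)
  case 0
  show ?case
    by simp
next
  case (Suc n)
  show ?case
    by (simp only: play.simps Let_def rho1_def tau1_diff tau2_diff rho2_diff Suc.IH)
      (simp add: algebra_simps)
qed

lemma play_Cons:
  "play n p r g \<sigma>1 \<sigma>2 t x (e # hs) = play n p r g (continuation e \<sigma>1) (continuation e \<sigma>2) t x hs"
  by (induction n arbitrary: t x hs) (simp_all add: Let_def continuation_def)

lemma continuous_on_tau1_pmf_rule: "continuous_on rule_vectors (\<lambda>q. tau1 x (pmf_rule q) w)"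
proof -
  obtain s h1 h2 a1 where w: "w = (s, h1, h2, a1)"
    by (cases w)
  have "tau1 x (pmf_rule q) w = x (s, h1, h2) * q h1 a1" if "q \<in> rule_vectors" for q
    using that by (simp add: w tau1_def pmf_pmf_rule)
  then show ?thesis
    by (subst continuous_on_cong[OF refl]) (auto intro!: continuous_intros continuous_on_rule_entry)
qed

lemma continuous_on_tau2_pmf_rule: "continuous_on rule_vectors (\<lambda>q. tau2 p y (pmf_rule q) w)"
proof -
  obtain s' h1 h2 where w: "w = (s', h1, h2)"
    by (cases w)
  obtain a1 z1 a2 z2 where last: "last h1 = (a1, z1)" "last h2 = (a2, z2)"
    by (cases "last h1", cases "last h2")
  show ?thesis
  proof (cases "h1 \<noteq> [] \<and> h2 \<noteq> []")
    case True
    then have "tau2 p y (pmf_rule q) w = (\<Sum>s\<in>UNIV.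
        y (s, butlast h1, butlast h2, a1) * q (butlast h2) a2 * pmf (p s a1 a2) (s', z1, z2))"
      if "q \<in> rule_vectors" for q
      using that by (simp add: w tau2_def last pmf_pmf_rule)
    then show ?thesis
      by (subst continuous_on_cong[OF refl]) (auto intro!: continuous_intros continuous_on_rule_entry)
  next
    case False
    then have "tau2 p y (pmf_rule q) w = 0" for q
      by (simp only: w tau2_def prod.case if_not_P if_False)
    then show ?thesis
      by simp
  qed
qed

lemma continuous_on_rho2_pmf_rule: "continuous_on rule_vectors (\<lambda>q. rho2 t r y (pmf_rule q))"
proof -
  have "rho2 t r y (pmf_rule q)
      = (\<Sum>(s, h1, h2, a1)\<in>occ2_dom t. \<Sum>a2\<in>UNIV. y (s, h1, h2, a1) * q h2 a2 * r s a1 a2)"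
    if "q \<in> rule_vectors" for q
    using that by (simp add: rho2_def pmf_pmf_rule)
  then show ?thesis
    by (subst continuous_on_cong[OF refl])
      (auto simp: split_def intro!: continuous_intros continuous_on_rule_entry)
qed

context
  fixes p :: "'s::finite \<Rightarrow> 'a1::finite \<Rightarrow> 'a2::finite \<Rightarrow> ('s \<times> 'z1::finite \<times> 'z2::finite) pmf"
    and r :: "'s \<Rightarrow> 'a1 \<Rightarrow> 'a2 \<Rightarrow> real" and g :: real and L :: nat
  assumes g_nonneg: "0 \<le> g"
begin

lemma stage2_bound_if_play_bound:
  assumes "0 \<le> K"
    and play_le: "\<And>\<sigma>1 \<sigma>2 x hs. \<bar>play n p r g \<sigma>1 \<sigma>2 (Suc t) x hs\<bar> \<le> K * l1_on (occ1_dom (Suc t)) x"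
  shows "\<exists>K'\<ge>0. \<forall>\<sigma>1 \<sigma>2 y d hs.
    \<bar>rho2 t r y d + g * play n p r g \<sigma>1 \<sigma>2 (Suc t) (tau2 p y d) hs\<bar> \<le> K' * l1_on (occ2_dom t) y"
proof -
  define R where "R = (\<Sum>(s, a1, a2)\<in>UNIV. \<bar>r s a1 a2\<bar>)"
  have R: "\<bar>r s a1 a2\<bar> \<le> R" for s a1 a2
    unfolding R_def using member_le_sum[of "(s, a1, a2)" UNIV "\<lambda>(s, a1, a2). \<bar>r s a1 a2\<bar>"] by auto
  obtain C where "0 \<le> C" and C: "\<And>y d. l1_on (occ1_dom (Suc t)) (tau2 p y d) \<le> C * l1_on (occ2_dom t) y"
    using l1_on_tau2_le by blast
  have "\<bar>rho2 t r y d + g * play n p r g \<sigma>1 \<sigma>2 (Suc t) (tau2 p y d) hs\<bar>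
      \<le> (R + g * K * C) * l1_on (occ2_dom t) y" for \<sigma>1 \<sigma>2 y d hs
  proof -
    have "\<bar>rho2 t r y d + g * play n p r g \<sigma>1 \<sigma>2 (Suc t) (tau2 p y d) hs\<bar>
        \<le> \<bar>rho2 t r y d\<bar> + g * \<bar>play n p r g \<sigma>1 \<sigma>2 (Suc t) (tau2 p y d) hs\<bar>"
      using g_nonneg by (simp add: abs_mult abs_triangle_ineq[THEN order_trans])
    also have "\<dots> \<le> R * l1_on (occ2_dom t) y + g * (K * (C * l1_on (occ2_dom t) y))"
      using abs_rho2_le[OF R] order_trans[OF play_le mult_left_mono[OF C \<open>0 \<le> K\<close>]]
      by (intro add_mono mult_left_mono g_nonneg)
    also have "\<dots> = (R + g * K * C) * l1_on (occ2_dom t) y"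
      by (simp add: algebra_simps)
    finally show ?thesis .
  qed
  moreover have "0 \<le> R + g * K * C"
    using R[of undefined undefined undefined] g_nonneg \<open>0 \<le> K\<close> \<open>0 \<le> C\<close> by simp
  ultimately show ?thesis
    by blast
qed

lemma play_bound: "\<exists>K\<ge>0. \<forall>\<sigma>1 \<sigma>2 x hs. \<bar>play n p r g \<sigma>1 \<sigma>2 t x hs\<bar> \<le> K * l1_on (occ1_dom t) x"
proof (induction n arbitrary: t)
  case 0
  show ?case
    by (intro exI[of _ 0]) simp
next
  case (Suc n)
  obtain K where K: "0 \<le> K"
    "\<And>\<sigma>1 \<sigma>2 x hs. \<bar>play n p r g \<sigma>1 \<sigma>2 (Suc t) x hs\<bar> \<le> K * l1_on (occ1_dom (Suc t)) x"
    using Suc.IH by blast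
  obtain K' where "0 \<le> K'" and K': "\<And>\<sigma>1 \<sigma>2 y d hs.
      \<bar>rho2 t r y d + g * play n p r g \<sigma>1 \<sigma>2 (Suc t) (tau2 p y d) hs\<bar> \<le> K' * l1_on (occ2_dom t) y"
    using stage2_bound_if_play_bound[OF K] by blast
  have "\<bar>play (Suc n) p r g \<sigma>1 \<sigma>2 t x hs\<bar> \<le> K' * l1_on (occ2_dom t) (tau1 x (\<sigma>1 hs))"
    for \<sigma>1 \<sigma>2 x hs
    using K'[where y = "tau1 x (\<sigma>1 hs)"] by (simp only: play.simps Let_def rho1_def add_0)
  then show ?case
    using \<open>0 \<le> K'\<close> by (auto simp only: l1_on_tau1)
qed

lemma stage2_bound: "\<exists>K\<ge>0. \<forall>\<sigma>1 \<sigma>2 y d hs.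
    \<bar>rho2 t r y d + g * play n p r g \<sigma>1 \<sigma>2 (Suc t) (tau2 p y d) hs\<bar> \<le> K * l1_on (occ2_dom t) y"
proof -
  obtain K where "0 \<le> K"
    and "\<And>\<sigma>1 \<sigma>2 x hs. \<bar>play n p r g \<sigma>1 \<sigma>2 (Suc t) x hs\<bar> \<le> K * l1_on (occ1_dom (Suc t)) x"
    using play_bound by blast
  then show ?thesis
    by (rule stage2_bound_if_play_bound)
qed

lemma pay1_diff: "pay1 p r g L \<sigma>1 \<sigma>2 t (x - x') = pay1 p r g L \<sigma>1 \<sigma>2 t x - pay1 p r g L \<sigma>1 \<sigma>2 t x'"
  by (simp add: pay1_def play_diff)

lemma pay2_diff: "pay2 p r g L \<sigma>1 \<sigma>2 t (y - y') = pay2 p r g L \<sigma>1 \<sigma>2 t y - pay2 p r g L \<sigma>1 \<sigma>2 t y'"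
  by (simp add: pay2_def Let_def rho2_diff tau2_diff play_diff algebra_simps)

lemma pay1_bound: "\<exists>K\<ge>0. \<forall>\<sigma>1 \<sigma>2 x. \<bar>pay1 p r g L \<sigma>1 \<sigma>2 t x\<bar> \<le> K * l1_on (occ1_dom t) x"
  using play_bound[of "L - t" t] unfolding pay1_def by blast

lemma pay2_bound: "\<exists>K\<ge>0. \<forall>\<sigma>1 \<sigma>2 y. \<bar>pay2 p r g L \<sigma>1 \<sigma>2 t y\<bar> \<le> K * l1_on (occ2_dom t) y"
proof (cases "L \<le> t")
  case True
  then show ?thesis
    by (intro exI[of _ 0]) (simp add: pay2_def)
next
  case False
  then show ?thesis
    using stage2_bound[of t "L - Suc t"] unfolding pay2_def Let_def by auto
qed

lemma pay1_eq_pay2_tau1: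
  assumes "t < L"
  shows "pay1 p r g L \<sigma>1 \<sigma>2 t x
    = pay2 p r g L (continuation (Inl (\<sigma>1 [])) \<sigma>1) (continuation (Inl (\<sigma>1 [])) \<sigma>2) t (tau1 x (\<sigma>1 []))"
proof -
  have "L - t = Suc (L - Suc t)"
    using assms by simp
  then show ?thesis
    using assms by (simp add: pay1_def pay2_def Let_def rho1_def play_Cons)
qed

lemma pay2_eq_stage2:
  assumes "t < L"
  shows "pay2 p r g L \<sigma>1 \<sigma>2 t y = rho2 t r y (\<sigma>2 [])
    + g * pay1 p r g L (continuation (Inr (\<sigma>2 [])) \<sigma>1) (continuation (Inr (\<sigma>2 [])) \<sigma>2) (Suc t) (tau2 p y (\<sigma>2 []))"
  using assms by (simp add: pay1_def pay2_def Let_def play_Cons)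

lemma vseq1_lipschitz:
  "\<exists>K. \<forall>x x'. \<bar>vseq1 p r g L t x - vseq1 p r g L t x'\<bar> \<le> K * l1_on (occ1_dom t) (x - x')"
proof -
  obtain K where "0 \<le> K" and K: "\<And>\<sigma>1 \<sigma>2 x. \<bar>pay1 p r g L \<sigma>1 \<sigma>2 t x\<bar> \<le> K * l1_on (occ1_dom t) x"
    using pay1_bound by blast
  have "\<bar>vseq1 p r g L t x - vseq1 p r g L t x'\<bar> \<le> K * l1_on (occ1_dom t) (x - x')" for x x'
    unfolding vseq1_def
    by (rule abs_SUP_INF_diff_le[where f = "\<lambda>\<sigma>1 \<sigma>2. pay1 p r g L \<sigma>1 \<sigma>2 t"])
      (simp_all add: pay1_diff K \<open>0 \<le> K\<close> l1_on_nonneg)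
  then show ?thesis
    by blast
qed

lemma vseq2_lipschitz:
  "\<exists>K. \<forall>y y'. \<bar>vseq2 p r g L t y - vseq2 p r g L t y'\<bar> \<le> K * l1_on (occ2_dom t) (y - y')"
proof -
  obtain K where "0 \<le> K" and K: "\<And>\<sigma>1 \<sigma>2 y. \<bar>pay2 p r g L \<sigma>1 \<sigma>2 t y\<bar> \<le> K * l1_on (occ2_dom t) y"
    using pay2_bound by blast
  have "\<bar>vseq2 p r g L t y - vseq2 p r g L t y'\<bar> \<le> K * l1_on (occ2_dom t) (y - y')" for y y'
    unfolding vseq2_def
    by (rule abs_SUP_INF_diff_le[where f = "\<lambda>\<sigma>1 \<sigma>2. pay2 p r g L \<sigma>1 \<sigma>2 t"])
      (simp_all add: pay2_diff K \<open>0 \<le> K\<close> l1_on_nonneg)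
  then show ?thesis
    by blast
qed

lemma vseq1_Bellman:
  assumes "t < L"
  shows "vseq1 p r g L t x = (SUP d. vseq2 p r g L t (tau1 x d))"
proof -
  obtain K where K: "\<And>\<sigma>1 \<sigma>2 y. \<bar>pay2 p r g L \<sigma>1 \<sigma>2 t y\<bar> \<le> K * l1_on (occ2_dom t) y"
    using pay2_bound by blast
  define G where "G d \<tau> = (INF \<tau>2. pay2 p r g L \<tau> \<tau>2 t (tau1 x d))" for d \<tau>
  have G_bound: "\<bar>G d \<tau>\<bar> \<le> K * l1_on (occ1_dom t) x" for d \<tau>
    unfolding G_def by (rule abs_INF_le) (metis K l1_on_tau1)
  have "(INF \<sigma>2. pay1 p r g L \<sigma>1 \<sigma>2 t x) = G (\<sigma>1 []) (continuation (Inl (\<sigma>1 [])) \<sigma>1)" for \<sigma>1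
    unfolding pay1_eq_pay2_tau1[OF assms] G_def
    by (rule INF_continuation[where f = "\<lambda>\<tau>2. pay2 p r g L (continuation (Inl (\<sigma>1 [])) \<sigma>1) \<tau>2 t (tau1 x (\<sigma>1 []))"])
  then have "vseq1 p r g L t x = (SUP \<sigma>1. G (\<sigma>1 []) (continuation (Inl (\<sigma>1 [])) \<sigma>1))"
    by (simp add: vseq1_def)
  also have "\<dots> = (SUP d. SUP \<tau>. G d \<tau>)"
    by (rule SUP_first_move[where c = Inl, OF G_bound])
  finally show ?thesis
    by (simp add: G_def vseq2_def)
qed

lemma SUP_INF_stage2_payoff:
  "(SUP \<tau>1. INF \<tau>2. rho2 t r y d + g * pay1 p r g L \<tau>1 \<tau>2 (Suc t) (tau2 p y d))
    = rho2 t r y d + g * vseq1 p r g L (Suc t) (tau2 p y d)"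
proof -
  obtain K where K: "\<And>\<sigma>1 \<sigma>2 x. \<bar>pay1 p r g L \<sigma>1 \<sigma>2 (Suc t) x\<bar> \<le> K * l1_on (occ1_dom (Suc t)) x"
    using pay1_bound by blast
  let ?pay = "\<lambda>\<tau>1 \<tau>2. pay1 p r g L \<tau>1 \<tau>2 (Suc t) (tau2 p y d)"
  have "(INF \<tau>2. rho2 t r y d + g * ?pay \<tau>1 \<tau>2) = rho2 t r y d + g * (INF \<tau>2. ?pay \<tau>1 \<tau>2)" for \<tau>1
    by (rule INF_affine[where f = "?pay \<tau>1"]) (rule K, rule g_nonneg)
  moreover have "(SUP \<tau>1. rho2 t r y d + g * (INF \<tau>2. ?pay \<tau>1 \<tau>2))
      = rho2 t r y d + g * (SUP \<tau>1. INF \<tau>2. ?pay \<tau>1 \<tau>2)"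
    by (rule SUP_affine[where f = "\<lambda>\<tau>1. INF \<tau>2. ?pay \<tau>1 \<tau>2"]) (rule abs_INF_le, rule K, rule g_nonneg)
  ultimately show ?thesis
    by (simp add: vseq1_def)
qed

lemma vseq2_Bellman:
  assumes "t < L"
  shows "vseq2 p r g L t y = (INF d. rho2 t r y d + g * vseq1 p r g L (Suc t) (tau2 p y d))"
proof -
  obtain K where K: "\<And>\<sigma>1 \<sigma>2 d. \<bar>rho2 t r y d + g * pay1 p r g L \<sigma>1 \<sigma>2 (Suc t) (tau2 p y d)\<bar> \<le> K"
    using stage2_bound[of t "L - Suc t"] unfolding pay1_def by blast
  define W where
    "W d \<tau>1 = (INF \<tau>2. rho2 t r y d + g * pay1 p r g L \<tau>1 \<tau>2 (Suc t) (tau2 p y d))" for d \<tau>1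
  have W_bound: "\<bar>W d \<tau>1\<bar> \<le> K" for d \<tau>1
    unfolding W_def by (rule abs_INF_le) (rule K)
  have "(INF \<sigma>2. pay2 p r g L \<sigma>1 \<sigma>2 t y) = (INF d. W d (continuation (Inr d) \<sigma>1))" for \<sigma>1
    unfolding pay2_eq_stage2[OF assms] W_def
    by (rule INF_first_move[where c = Inr and f = "\<lambda>d \<tau>2. rho2 t r y d
        + g * pay1 p r g L (continuation (Inr d) \<sigma>1) \<tau>2 (Suc t) (tau2 p y d)"]) (rule K)
  then have "vseq2 p r g L t y = (SUP \<sigma>1. INF d. W d (continuation (Inr d) \<sigma>1))"
    by (simp add: vseq2_def)
  also have "\<dots> = (SUP F. INF d. W d (F d))"
    by (rule SUP_continuation_family[where c = Inr and f = "\<lambda>F. INF d. W d (F d)"]) simp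
  also have "\<dots> = (INF d. SUP \<tau>. W d \<tau>)"
    by (rule SUP_INF_choice_eq_INF_SUP[OF W_bound])
  also have "\<dots> = (INF d. rho2 t r y d + g * vseq1 p r g L (Suc t) (tau2 p y d))"
    by (simp add: W_def SUP_INF_stage2_payoff)
  finally show ?thesis .
qed

lemma continuous_on_vseq2_tau1:
  "continuous_on rule_vectors (\<lambda>q. vseq2 p r g L t (tau1 x (pmf_rule q)))"
proof -
  obtain K where "\<And>y y'. \<bar>vseq2 p r g L t y - vseq2 p r g L t y'\<bar> \<le> K * l1_on (occ2_dom t) (y - y')"
    using vseq2_lipschitz by blast
  then show ?thesis
    by (rule continuous_on_lipschitz_l1_comp) (simp_all add: continuous_on_tau1_pmf_rule)
qed

lemma continuous_on_stage2_value:
  "continuous_on rule_vectors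
    (\<lambda>q. rho2 t r y (pmf_rule q) + g * vseq1 p r g L (Suc t) (tau2 p y (pmf_rule q)))"
proof -
  obtain K where "\<And>x x'. \<bar>vseq1 p r g L (Suc t) x - vseq1 p r g L (Suc t) x'\<bar>
      \<le> K * l1_on (occ1_dom (Suc t)) (x - x')"
    using vseq1_lipschitz by blast
  then have "continuous_on rule_vectors (\<lambda>q. vseq1 p r g L (Suc t) (tau2 p y (pmf_rule q)))"
    by (rule continuous_on_lipschitz_l1_comp) (simp_all add: continuous_on_tau2_pmf_rule)
  then show ?thesis
    using continuous_on_rho2_pmf_rule by (intro continuous_on_add continuous_on_mult_left)
qed

lemma vseq1_Bellman_max:
  assumes "t < L"
  shows "\<exists>d. vseq1 p r g L t x = vseq2 p r g L t (tau1 x d)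
    \<and> (\<forall>d'. vseq2 p r g L t (tau1 x d') \<le> vseq2 p r g L t (tau1 x d))"
proof -
  obtain d where d: "\<And>d'. vseq2 p r g L t (tau1 x d') \<le> vseq2 p r g L t (tau1 x d)"
    using decision_rule_maximum_exists[of "\<lambda>d. vseq2 p r g L t (tau1 x d)", OF continuous_on_vseq2_tau1]
    by blast
  then have "vseq1 p r g L t x = vseq2 p r g L t (tau1 x d)"
    unfolding vseq1_Bellman[OF assms] by (intro cSup_eq_maximum) auto
  with d show ?thesis
    by blast
qed

lemma vseq2_Bellman_min:
  assumes "t < L"
  shows "\<exists>d. vseq2 p r g L t y = rho2 t r y d + g * vseq1 p r g L (Suc t) (tau2 p y d)
    \<and> (\<forall>d'. rho2 t r y d + g * vseq1 p r g L (Suc t) (tau2 p y d)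
      \<le> rho2 t r y d' + g * vseq1 p r g L (Suc t) (tau2 p y d'))"
proof -
  obtain d where d: "\<And>d'. rho2 t r y d + g * vseq1 p r g L (Suc t) (tau2 p y d)
      \<le> rho2 t r y d' + g * vseq1 p r g L (Suc t) (tau2 p y d')"
    using decision_rule_minimum_exists[of "\<lambda>d. rho2 t r y d + g * vseq1 p r g L (Suc t) (tau2 p y d)",
        OF continuous_on_stage2_value]
    by blast
  then have "vseq2 p r g L t y = rho2 t r y d + g * vseq1 p r g L (Suc t) (tau2 p y d)"
    unfolding vseq2_Bellman[OF assms] by (intro cInf_eq_minimum) auto
  with d show ?thesis
    by blast
qed

end

text \<open>The equations hold for all real-valued \<open>x\<close> and \<open>y\<close> and all \<open>\<gamma> \<ge> 0\<close>.\<close>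

theorem theorem3p3:
  fixes p :: "'s::finite \<Rightarrow> 'a1::finite \<Rightarrow> 'a2::finite \<Rightarrow> ('s \<times> 'z1::finite \<times> 'z2::finite) pmf"
    and r :: "'s \<Rightarrow> 'a1 \<Rightarrow> 'a2 \<Rightarrow> real"
    and \<gamma> :: real and L t :: nat
  assumes "0 \<le> \<gamma>" and "\<gamma> < 1" and "t < L"
  shows "(\<forall>x :: 's \<times> ('a1 \<times> 'z1) list \<times> ('a2 \<times> 'z2) list \<Rightarrow> real. occ1 t x \<longrightarrow>
            (\<exists>d. vseq1 p r \<gamma> L t x = rho1 x d + 1 * vseq2 p r \<gamma> L t (tau1 x d)
               \<and> (\<forall>d'. rho1 x d' + 1 * vseq2 p r \<gamma> L t (tau1 x d')
                        \<le> rho1 x d + 1 * vseq2 p r \<gamma> L t (tau1 x d))))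
       \<and> (\<forall>y :: 's \<times> ('a1 \<times> 'z1) list \<times> ('a2 \<times> 'z2) list \<times> 'a1 \<Rightarrow> real. occ2 t y \<longrightarrow>
            (\<exists>d. vseq2 p r \<gamma> L t y = rho2 t r y d + \<gamma> * vseq1 p r \<gamma> L (Suc t) (tau2 p y d)
               \<and> (\<forall>d'. rho2 t r y d + \<gamma> * vseq1 p r \<gamma> L (Suc t) (tau2 p y d)
                        \<le> rho2 t r y d' + \<gamma> * vseq1 p r \<gamma> L (Suc t) (tau2 p y d'))))"
  using vseq1_Bellman_max[OF assms(1,3)] vseq2_Bellman_min[OF assms(1,3)] by (simp add: rho1_def) blast

end
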